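(* Consider a finite discrete-time system $x_{k+1} = F(x_k,u_k,\theta,d_k)$ with finite sets $X,U,\Theta,D$, Boolean outputs $\mu_1,\dots,\mu_m : X\to\mathbb{B}$, atomic propositions $\Pi=\{\pi_1,\dots,\pi_m\}$ and observation map $O(x)=\{\pi_i \mid \mu_i(x)=\mathrm{True}\}$. Let $\varphi$ be an LTL formula over $\Pi$, and let $X_0^{\max}\subseteq X$ be the set defined in the context (obtained from the winning region of the Rabin game on the product of the adaptive transition system with the deterministic Rabin automaton of $\varphi$). Then for every initial condition $x_0\in X$ the following are equivalent: (i) there exists a control strategy $\Lambda^* : X^*\times U^*\to U$ such that, for every $\theta\in\Theta$ and every disturbance sequence $d_0d_1\cdots$ with $d_k\in D$, the trajectory $x_{k+1}=F(x_k,u_k,\theta,d_k)$ with $u_k=\Lambda^*(x_0\cdots x_k, u_0\cdots u_{k-1})$ produces a word $O(x_0)O(x_1)\cdots$ satisfying $\varphi$; (ii) $x_0\in X_0^{\max}$.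
   Context: System: $F: X\times U\times\Theta\times D\to X$; the parameter $\theta$ is constant but unknown to the controller, while the disturbance $d$ may vary arbitrarily in $D$ at each step. $2^\Theta_{-\emptyset}$ denotes the set of nonempty subsets of $\Theta$. Parametric transition system (embedding): $\gamma(x,u,\theta)=\{F(x,u,\theta,d)\mid d\in D\}$. Recursive parameter estimator: for $\vartheta\in 2^\Theta_{-\emptyset}$, $x,x'\in X$, $u\in U$, $\Gamma_{rec}(\vartheta,x,u,x')=\{\theta\in\vartheta \mid x'\in\gamma(x,u,\theta)\}$. Adaptive transition system (ATS): states $X^{adp}\subseteq X\times 2^\Theta_{-\emptyset}$ are those reachable from $\{(x,\Theta)\mid x\in X\}$ under the transition function $\gamma^{adp}$, where $(x',\vartheta')\in\gamma^{adp}((x,\vartheta),u)$ iff $x'\in\gamma(x,u,\theta)$ for some $\theta\in\vartheta$ and $\vartheta'=\Gamma_{rec}(\vartheta,x,u,x')$; observation $O^{adp}(x,\vartheta)=O(x)$. Deterministic Rabin automaton (DRA) $\mathcal{R}_\varphi=(S,s^0,2^\Pi,\alpha,\Omega)$ with transition function $\alpha:S\times 2^\Pi\to S$ and pairs $\Omega=\{(F_1,I_1),\dots,(F_r,I_r)\}$, $F_i,I_i\subseteq S$, accepting exactly the words satisfying $\varphi$; a run is accepting if for some $i$ it visits $F_i$ finitely often and $I_i$ infinitely often. Product: states $X^{adp}\times S$, controls $U$, with $((x',\vartheta'),s')$ a successor of $((x,\vartheta),s)$ under $u$ iff $(x',\vartheta')\in\gamma^{adp}((x,\vartheta),u)$ and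 $s'=\alpha(s,O(x))$; Rabin pairs $F_i^P=X^{adp}\times F_i$, $I_i^P=X^{adp}\times I_i$. The Rabin game: the controller chooses $u$, the adversary chooses a successor; the winning region is the set of product states from which the controller has a strategy guaranteeing that every resulting run satisfies the Rabin condition for some pair. Let $X_0^{adp,\max}$ be the set of states $y\in X^{adp}$ such that $(y,s^0)$ lies in the winning region, and $X_0^{\max}=\{x_0\in X\mid (x_0,\Theta)\in X_0^{adp,\max}\}$. *)

theory Defs
  imports Main
begin

datatype 'p ltl =
    LTrue
  | Atom 'p
  | LNot "'p ltl"
  | LAnd "'p ltl" "'p ltl"
  | LNext "'p ltl"
  | LUntil "'p ltl" "'p ltl"

fun ltl_sat_at :: "(nat \<Rightarrow> 'p set) \<Rightarrow> nat \<Rightarrow> 'p ltl \<Rightarrow> bool" where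
  "ltl_sat_at w i LTrue = True"
| "ltl_sat_at w i (Atom p) = (p \<in> w i)"
| "ltl_sat_at w i (LNot f) = (\<not> ltl_sat_at w i f)"
| "ltl_sat_at w i (LAnd f g) = (ltl_sat_at w i f \<and> ltl_sat_at w i g)"
| "ltl_sat_at w i (LNext f) = ltl_sat_at w (Suc i) f"
| "ltl_sat_at w i (LUntil f g) =
     (\<exists>j\<ge>i. ltl_sat_at w j g \<and> (\<forall>k. i \<le> k \<and> k < j \<longrightarrow> ltl_sat_at w k f))"

definition ltl_sat :: "(nat \<Rightarrow> 'p set) \<Rightarrow> 'p ltl \<Rightarrow> bool" where
  "ltl_sat w f = ltl_sat_at w 0 f"

fun dra_run :: "('s \<Rightarrow> 'p set \<Rightarrow> 's) \<Rightarrow> 's \<Rightarrow> (nat \<Rightarrow> 'p set) \<Rightarrow> nat \<Rightarrow> 's" where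
  "dra_run \<alpha> s0 w 0 = s0"
| "dra_run \<alpha> s0 w (Suc k) = \<alpha> (dra_run \<alpha> s0 w k) (w k)"

definition rabin_acc :: "('s set \<times> 's set) list \<Rightarrow> (nat \<Rightarrow> 's) \<Rightarrow> bool" where
  "rabin_acc \<Omega> r = (\<exists>(Fi, Ii) \<in> set \<Omega>. finite {k. r k \<in> Fi} \<and> infinite {k. r k \<in> Ii})"

definition dra_accepts ::
  "('s \<Rightarrow> 'p set \<Rightarrow> 's) \<Rightarrow> 's \<Rightarrow> ('s set \<times> 's set) list \<Rightarrow> (nat \<Rightarrow> 'p set) \<Rightarrow> bool" where
  "dra_accepts \<alpha> s0 \<Omega> w = rabin_acc \<Omega> (dra_run \<alpha> s0 w)"

definition obs :: "('p \<Rightarrow> 'x \<Rightarrow> bool) \<Rightarrow> 'x \<Rightarrow> 'p set" where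
  "obs \<mu> x = {p. \<mu> p x}"

definition gamma :: "('x \<Rightarrow> 'u \<Rightarrow> 'th \<Rightarrow> 'd \<Rightarrow> 'x) \<Rightarrow> 'x \<Rightarrow> 'u \<Rightarrow> 'th \<Rightarrow> 'x set" where
  "gamma F x u \<theta> = {F x u \<theta> d | d. True}"

definition Gamma_rec ::
  "('x \<Rightarrow> 'u \<Rightarrow> 'th \<Rightarrow> 'd \<Rightarrow> 'x) \<Rightarrow> 'th set \<Rightarrow> 'x \<Rightarrow> 'u \<Rightarrow> 'x \<Rightarrow> 'th set" where
  "Gamma_rec F V x u x' = {\<theta> \<in> V. x' \<in> gamma F x u \<theta>}"

definition adp_trans ::
  "('x \<Rightarrow> 'u \<Rightarrow> 'th \<Rightarrow> 'd \<Rightarrow> 'x) \<Rightarrow> ('x \<times> 'th set) \<Rightarrow> 'u \<Rightarrow> ('x \<times> 'th set) set" where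
  "adp_trans F y u =
     {(x', Gamma_rec F (snd y) (fst y) u x') | x'. \<exists>\<theta> \<in> snd y. x' \<in> gamma F (fst y) u \<theta>}"

inductive_set adp_states :: "('x \<Rightarrow> 'u \<Rightarrow> 'th \<Rightarrow> 'd \<Rightarrow> 'x) \<Rightarrow> ('x \<times> 'th set) set"
  for F :: "'x \<Rightarrow> 'u \<Rightarrow> 'th \<Rightarrow> 'd \<Rightarrow> 'x" where
  init: "(x, UNIV) \<in> adp_states F"
| step: "y \<in> adp_states F \<Longrightarrow> y' \<in> adp_trans F y u \<Longrightarrow> y' \<in> adp_states F"

definition prod_succ ::
  "('x \<Rightarrow> 'u \<Rightarrow> 'th \<Rightarrow> 'd \<Rightarrow> 'x) \<Rightarrow> ('p \<Rightarrow> 'x \<Rightarrow> bool) \<Rightarrow> ('s \<Rightarrow> 'p set \<Rightarrow> 's)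
   \<Rightarrow> (('x \<times> 'th set) \<times> 's) \<Rightarrow> 'u \<Rightarrow> (('x \<times> 'th set) \<times> 's) set" where
  "prod_succ F \<mu> \<alpha> q u =
     {(y', \<alpha> (snd q) (obs \<mu> (fst (fst q)))) | y'. y' \<in> adp_trans F (fst q) u}"

text \<open>A play from q0 consistent with a (history-dependent) controller strategy sigma:
  the controller picks u from the history, the adversary picks any successor.\<close>
definition game_play ::
  "('x \<Rightarrow> 'u \<Rightarrow> 'th \<Rightarrow> 'd \<Rightarrow> 'x) \<Rightarrow> ('p \<Rightarrow> 'x \<Rightarrow> bool) \<Rightarrow> ('s \<Rightarrow> 'p set \<Rightarrow> 's)
   \<Rightarrow> ((('x \<times> 'th set) \<times> 's) list \<Rightarrow> 'u) \<Rightarrow> (('x \<times> 'th set) \<times> 's)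
   \<Rightarrow> (nat \<Rightarrow> (('x \<times> 'th set) \<times> 's)) \<Rightarrow> bool" where
  "game_play F \<mu> \<alpha> \<sigma> q0 q =
     (q 0 = q0 \<and> (\<forall>k. q (Suc k) \<in> prod_succ F \<mu> \<alpha> (q k) (\<sigma> (map q [0..<Suc k]))))"

text \<open>Winning region of the Rabin game on the product (pairs X^adp x F_i, X^adp x I_i).\<close>
definition win_region ::
  "('x \<Rightarrow> 'u \<Rightarrow> 'th \<Rightarrow> 'd \<Rightarrow> 'x) \<Rightarrow> ('p \<Rightarrow> 'x \<Rightarrow> bool) \<Rightarrow> ('s \<Rightarrow> 'p set \<Rightarrow> 's)
   \<Rightarrow> ('s set \<times> 's set) list \<Rightarrow> (('x \<times> 'th set) \<times> 's) set" where
  "win_region F \<mu> \<alpha> \<Omega> =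
     {q0. fst q0 \<in> adp_states F \<and>
          (\<exists>\<sigma>. \<forall>q. game_play F \<mu> \<alpha> \<sigma> q0 q \<longrightarrow> rabin_acc \<Omega> (snd \<circ> q))}"

definition X0_max ::
  "('x \<Rightarrow> 'u \<Rightarrow> 'th \<Rightarrow> 'd \<Rightarrow> 'x) \<Rightarrow> ('p \<Rightarrow> 'x \<Rightarrow> bool) \<Rightarrow> ('s \<Rightarrow> 'p set \<Rightarrow> 's)
   \<Rightarrow> 's \<Rightarrow> ('s set \<times> 's set) list \<Rightarrow> 'x set" where
  "X0_max F \<mu> \<alpha> s0 \<Omega> = {x0. ((x0, UNIV), s0) \<in> win_region F \<mu> \<alpha> \<Omega>}"

definition closed_loop ::
  "('x \<Rightarrow> 'u \<Rightarrow> 'th \<Rightarrow> 'd \<Rightarrow> 'x) \<Rightarrow> ('x list \<Rightarrow> 'u list \<Rightarrow> 'u) \<Rightarrow> 'th \<Rightarrow> (nat \<Rightarrow> 'd)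
   \<Rightarrow> 'x \<Rightarrow> (nat \<Rightarrow> 'x) \<Rightarrow> (nat \<Rightarrow> 'u) \<Rightarrow> bool" where
  "closed_loop F \<Lambda> \<theta> d x0 x u =
     (x 0 = x0 \<and>
      (\<forall>k. u k = \<Lambda> (map x [0..<Suc k]) (map u [0..<k]) \<and>
           x (Suc k) = F (x k) (u k) \<theta> (d k)))"

end

theory Submission
  imports Defs
begin

text \<open>A play of the Rabin game on the product is a closed-loop trajectory enriched by the
  recursive parameter estimate and the run of the automaton, and controllers and game
  strategies translate into each other along this correspondence. Along a play the parameters
  consistent with the observed transitions form a decreasing chain of nonempty subsets of the
  finite set \<open>\<Theta>\<close>, so a single parameter explains every transition and the play is a genuine
  trajectory of the system; conversely, along a closed-loop trajectory the true parameter never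
  leaves the estimate, so the trajectory is a play. The Rabin condition on the automaton
  component of a play is acceptance of the observed word, i.e. satisfaction of \<open>\<phi>\<close>.\<close>

lemma finite_decreasing_chain_common_element:
  fixes V :: "nat \<Rightarrow> 'a set"
  assumes fin: "finite (V 0)" and nonempty: "\<And>k. V k \<noteq> {}" and dec: "\<And>k. V (Suc k) \<subseteq> V k"
  shows "\<exists>a. \<forall>k. a \<in> V k"
proof -
  have antimono: "V j \<subseteq> V i" if "i \<le> j" for i j
    using that by (induction j rule: dec_induct) (use dec in blast)+
  obtain k where least_card: "\<And>j. card (V k) \<le> card (V j)"
    using ex_has_least_nat[of "\<lambda>_. True" 0 "\<lambda>j. card (V j)"] by blast
  obtain a where a: "a \<in> V k"
    using nonempty by blast
  have "a \<in> V j" for j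
  proof (cases "j \<le> k")
    case True
    then show ?thesis using antimono a by blast
  next
    case False
    then have "V j \<subseteq> V k" using antimono by simp
    moreover have "finite (V k)" using fin antimono[of 0 k] finite_subset by blast
    ultimately have "V j = V k" using least_card[of j] by (intro card_seteq)
    then show ?thesis using a by simp
  qed
  then show ?thesis by blast
qed

lemma dra_run_cong:
  "(\<And>i. i < k \<Longrightarrow> w i = w' i) \<Longrightarrow> dra_run \<alpha> s0 w k = dra_run \<alpha> s0 w' k"
  by (induction k) auto

fun param_estimate ::
  "('x \<Rightarrow> 'u \<Rightarrow> 'th \<Rightarrow> 'd \<Rightarrow> 'x) \<Rightarrow> (nat \<Rightarrow> 'x) \<Rightarrow> (nat \<Rightarrow> 'u) \<Rightarrow> nat \<Rightarrow> 'th set" where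
  "param_estimate F x u 0 = UNIV"
| "param_estimate F x u (Suc k) = Gamma_rec F (param_estimate F x u k) (x k) (u k) (x (Suc k))"

lemma param_estimate_cong:
  "(\<And>i. i \<le> k \<Longrightarrow> x i = x' i) \<Longrightarrow> (\<And>i. i < k \<Longrightarrow> u i = u' i)
   \<Longrightarrow> param_estimate F x u k = param_estimate F x' u' k"
  by (induction k) auto

lemma in_all_param_estimates_iff:
  "(\<forall>k. \<theta> \<in> param_estimate F x u k) \<longleftrightarrow> (\<exists>d. \<forall>k. x (Suc k) = F (x k) (u k) \<theta> (d k))"
proof
  assume "\<forall>k. \<theta> \<in> param_estimate F x u k"
  then have "\<exists>d. x (Suc k) = F (x k) (u k) \<theta> d" for k
    by (auto simp: Gamma_rec_def gamma_def dest: spec[of _ "Suc k"])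
  then show "\<exists>d. \<forall>k. x (Suc k) = F (x k) (u k) \<theta> (d k)"
    by metis
next
  assume "\<exists>d. \<forall>k. x (Suc k) = F (x k) (u k) \<theta> (d k)"
  then obtain d where "\<And>k. x (Suc k) = F (x k) (u k) \<theta> (d k)" by blast
  then show "\<forall>k. \<theta> \<in> param_estimate F x u k"
    by (intro allI, induct_tac k) (auto simp: Gamma_rec_def gamma_def)
qed

lemma adp_trans_iff:
  "(x', V') \<in> adp_trans F (x, V) u \<longleftrightarrow> V' = Gamma_rec F V x u x' \<and> V' \<noteq> {}"
  by (auto simp: adp_trans_def Gamma_rec_def)

lemma prod_succ_iff:
  "(y', s') \<in> prod_succ F \<mu> \<alpha> (y, s) u \<longleftrightarrow> y' \<in> adp_trans F y u \<and> s' = \<alpha> s (obs \<mu> (fst y))"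
  by (cases y') (auto simp: prod_succ_def)

definition product_trajectory ::
  "('x \<Rightarrow> 'u \<Rightarrow> 'th \<Rightarrow> 'd \<Rightarrow> 'x) \<Rightarrow> ('p \<Rightarrow> 'x \<Rightarrow> bool) \<Rightarrow> ('s \<Rightarrow> 'p set \<Rightarrow> 's) \<Rightarrow> 's
   \<Rightarrow> (nat \<Rightarrow> 'x) \<Rightarrow> (nat \<Rightarrow> 'u) \<Rightarrow> nat \<Rightarrow> ('x \<times> 'th set) \<times> 's" where
  "product_trajectory F \<mu> \<alpha> s0 x u k =
     ((x k, param_estimate F x u k), dra_run \<alpha> s0 (\<lambda>i. obs \<mu> (x i)) k)"

lemma snd_comp_product_trajectory:
  "snd \<circ> product_trajectory F \<mu> \<alpha> s0 x u = dra_run \<alpha> s0 (\<lambda>k. obs \<mu> (x k))"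
  by (auto simp: product_trajectory_def)

lemma product_trajectory_cong:
  assumes "\<And>i. i \<le> k \<Longrightarrow> x i = x' i" and "\<And>i. i < k \<Longrightarrow> u i = u' i"
  shows "product_trajectory F \<mu> \<alpha> s0 x u k = product_trajectory F \<mu> \<alpha> s0 x' u' k"
proof -
  have "dra_run \<alpha> s0 (\<lambda>i. obs \<mu> (x i)) k = dra_run \<alpha> s0 (\<lambda>i. obs \<mu> (x' i)) k"
    using assms(1) by (intro dra_run_cong) simp
  then show ?thesis
    using assms param_estimate_cong[of k x x' u u' F] by (simp add: product_trajectory_def)
qed

lemma product_trajectory_step_iff:
  "product_trajectory F \<mu> \<alpha> s0 x u (Suc k) \<in> prod_succ F \<mu> \<alpha> (product_trajectory F \<mu> \<alpha> s0 x u k) (u k)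
   \<longleftrightarrow> param_estimate F x u (Suc k) \<noteq> {}"
  by (simp add: product_trajectory_def prod_succ_iff adp_trans_iff)

lemma game_play_is_product_trajectory:
  assumes play: "game_play F \<mu> \<alpha> \<sigma> ((x0, UNIV), s0) q"
  defines "x \<equiv> \<lambda>k. fst (fst (q k))" and "u \<equiv> \<lambda>k. \<sigma> (map q [0..<Suc k])"
  shows "q = product_trajectory F \<mu> \<alpha> s0 x u" and "\<And>k. param_estimate F x u k \<noteq> {}"
proof -
  have q0: "q 0 = ((x0, UNIV), s0)"
    and step: "\<And>k. q (Suc k) \<in> prod_succ F \<mu> \<alpha> (q k) (u k)"
    using play by (simp_all add: game_play_def u_def)
  have "q k = product_trajectory F \<mu> \<alpha> s0 x u k" for k
  proof (induction k)
    case 0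
    then show ?case using q0 by (simp add: product_trajectory_def x_def)
  next
    case (Suc k)
    obtain x' V' s' where q_Suc: "q (Suc k) = ((x', V'), s')"
      by (metis prod.collapse)
    have "((x', V'), s') \<in> prod_succ F \<mu> \<alpha> (product_trajectory F \<mu> \<alpha> s0 x u k) (u k)"
      using step[of k] Suc.IH q_Suc by simp
    moreover have "x' = x (Suc k)"
      using q_Suc by (simp add: x_def)
    ultimately show ?case
      using q_Suc by (simp add: product_trajectory_def prod_succ_iff adp_trans_iff)
  qed
  then show traj: "q = product_trajectory F \<mu> \<alpha> s0 x u" ..
  show "param_estimate F x u k \<noteq> {}" for k
  proof (cases k)
    case (Suc j)
    then show ?thesis
      using step[of j] traj product_trajectory_step_iff by metis
  qed simp
qed

lemma product_trajectory_game_play: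
  assumes "x 0 = x0"
    and "\<And>k. u k = \<sigma> (map (product_trajectory F \<mu> \<alpha> s0 x u) [0..<Suc k])"
    and "\<And>k. param_estimate F x u (Suc k) \<noteq> {}"
  shows "game_play F \<mu> \<alpha> \<sigma> ((x0, UNIV), s0) (product_trajectory F \<mu> \<alpha> s0 x u)"
  using assms product_trajectory_step_iff[of F \<mu> \<alpha> s0 x u]
  by (auto simp: game_play_def product_trajectory_def)

text \<open>A game strategy sees only the history of states, not the inputs it has issued; it
  recovers them by replaying the controller on the prefixes of that history.\<close>

fun replayed_inputs :: "('x list \<Rightarrow> 'u list \<Rightarrow> 'u) \<Rightarrow> 'x list \<Rightarrow> nat \<Rightarrow> 'u list" where
  "replayed_inputs L xs 0 = []"
| "replayed_inputs L xs (Suc k) =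
     replayed_inputs L xs k @ [L (take (Suc k) xs) (replayed_inputs L xs k)]"

definition replay_strategy :: "('x list \<Rightarrow> 'u list \<Rightarrow> 'u) \<Rightarrow> 'x list \<Rightarrow> 'u" where
  "replay_strategy L xs = L xs (replayed_inputs L xs (length xs - 1))"

lemma replayed_inputs_take:
  "k \<le> n \<Longrightarrow> replayed_inputs L (take n xs) k = replayed_inputs L xs k"
  by (induction k) (auto simp: min_absorb1)

lemma replay_strategy_closed_loop:
  assumes "\<And>k. u k = replay_strategy L (map x [0..<Suc k])"
  shows "u k = L (map x [0..<Suc k]) (map u [0..<k])"
proof -
  have "replayed_inputs L (map x [0..<Suc k]) k = map u [0..<k]"
  proof (induction k)
    case (Suc k)
    have prefix: "take (Suc k) (map x [0..<Suc (Suc k)]) = map x [0..<Suc k]"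
      by (simp add: take_map)
    have "replayed_inputs L (map x [0..<Suc (Suc k)]) k = map u [0..<k]"
      using replayed_inputs_take[of k "Suc k" L "map x [0..<Suc (Suc k)]"] prefix Suc.IH by simp
    moreover have "u k = L (map x [0..<Suc k]) (map u [0..<k])"
      using assms[of k] Suc.IH by (simp add: replay_strategy_def)
    ultimately show ?case
      using prefix by simp
  qed simp
  then show ?thesis
    using assms[of k] by (simp add: replay_strategy_def)
qed

lemma closed_loop_of_replay_play:
  fixes F :: "'x \<Rightarrow> 'u \<Rightarrow> 'th::finite \<Rightarrow> 'd \<Rightarrow> 'x"
  assumes play: "game_play F \<mu> \<alpha> (replay_strategy L \<circ> map (fst \<circ> fst)) ((x0, UNIV), s0) q"
  shows "\<exists>\<theta> d x u. closed_loop F L \<theta> d x0 x u \<and> q = product_trajectory F \<mu> \<alpha> s0 x u"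
proof -
  define x where "x = (\<lambda>k. fst (fst (q k)))"
  define u where "u = (\<lambda>k. (replay_strategy L \<circ> map (fst \<circ> fst)) (map q [0..<Suc k]))"
  note play_facts = game_play_is_product_trajectory[OF play, folded x_def u_def]
  have traj: "q = product_trajectory F \<mu> \<alpha> s0 x u"
    by (fact play_facts(1))
  have "\<exists>\<theta>. \<forall>k. \<theta> \<in> param_estimate F x u k"
    by (rule finite_decreasing_chain_common_element) (auto simp: Gamma_rec_def play_facts(2))
  then obtain \<theta> d where "\<And>k. x (Suc k) = F (x k) (u k) \<theta> (d k)"
    using in_all_param_estimates_iff by metis
  moreover have "x 0 = x0"
    using play by (simp add: game_play_def x_def)
  moreover have "u k = L (map x [0..<Suc k]) (map u [0..<k])" for k
    by (rule replay_strategy_closed_loop) (simp add: u_def x_def comp_def)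
  ultimately show ?thesis
    using traj unfolding closed_loop_def by blast
qed

definition controller_of_strategy ::
  "('x \<Rightarrow> 'u \<Rightarrow> 'th \<Rightarrow> 'd \<Rightarrow> 'x) \<Rightarrow> ('p \<Rightarrow> 'x \<Rightarrow> bool) \<Rightarrow> ('s \<Rightarrow> 'p set \<Rightarrow> 's) \<Rightarrow> 's
   \<Rightarrow> ((('x \<times> 'th set) \<times> 's) list \<Rightarrow> 'u) \<Rightarrow> 'x list \<Rightarrow> 'u list \<Rightarrow> 'u" where
  "controller_of_strategy F \<mu> \<alpha> s0 \<sigma> xs us =
     \<sigma> (map (product_trajectory F \<mu> \<alpha> s0 ((!) xs) ((!) us)) [0..<length xs])"

lemma play_of_closed_loop:
  assumes "closed_loop F (controller_of_strategy F \<mu> \<alpha> s0 \<sigma>) \<theta> d x0 x u"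
  shows "game_play F \<mu> \<alpha> \<sigma> ((x0, UNIV), s0) (product_trajectory F \<mu> \<alpha> s0 x u)"
proof (rule product_trajectory_game_play)
  have x0: "x 0 = x0"
    and inputs: "\<And>k. u k = controller_of_strategy F \<mu> \<alpha> s0 \<sigma> (map x [0..<Suc k]) (map u [0..<k])"
    and transitions: "\<And>k. x (Suc k) = F (x k) (u k) \<theta> (d k)"
    using assms by (simp_all add: closed_loop_def)
  show "x 0 = x0" by (fact x0)
  show "u k = \<sigma> (map (product_trajectory F \<mu> \<alpha> s0 x u) [0..<Suc k])" for k
  proof -
    have "controller_of_strategy F \<mu> \<alpha> s0 \<sigma> (map x [0..<Suc k]) (map u [0..<k])
        = \<sigma> (map (product_trajectory F \<mu> \<alpha> s0 x u) [0..<Suc k])"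
      unfolding controller_of_strategy_def length_map length_upt diff_zero
      by (intro arg_cong[where f = \<sigma>] map_cong refl product_trajectory_cong)
        (simp_all del: upt_Suc)
    then show ?thesis
      using inputs[of k] by simp
  qed
  have "\<forall>k. \<theta> \<in> param_estimate F x u k"
    by (subst in_all_param_estimates_iff) (use transitions in blast)
  then show "param_estimate F x u (Suc k) \<noteq> {}" for k
    by blast
qed

theorem mainTheorem3:
  fixes F :: "'x::finite \<Rightarrow> 'u::finite \<Rightarrow> 'th::finite \<Rightarrow> 'd::finite \<Rightarrow> 'x"
    and \<mu> :: "'p::finite \<Rightarrow> 'x \<Rightarrow> bool"
    and \<phi> :: "'p ltl"
    and \<alpha> :: "'s::finite \<Rightarrow> 'p set \<Rightarrow> 's"
    and s0 :: 's
    and \<Omega> :: "('s set \<times> 's set) list"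
    and x0 :: 'x
  assumes dra: "\<And>w. dra_accepts \<alpha> s0 \<Omega> w \<longleftrightarrow> ltl_sat w \<phi>"
  shows "(\<exists>\<Lambda> :: 'x list \<Rightarrow> 'u list \<Rightarrow> 'u. \<forall>\<theta> d x u.
            closed_loop F \<Lambda> \<theta> d x0 x u \<longrightarrow> ltl_sat (\<lambda>k. obs \<mu> (x k)) \<phi>)
         \<longleftrightarrow> x0 \<in> X0_max F \<mu> \<alpha> s0 \<Omega>"
proof -
  have accepting_iff: "rabin_acc \<Omega> (snd \<circ> product_trajectory F \<mu> \<alpha> s0 x u)
      \<longleftrightarrow> ltl_sat (\<lambda>k. obs \<mu> (x k)) \<phi>" for x u
    using dra by (simp add: snd_comp_product_trajectory dra_accepts_def)
  show ?thesis
  proof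
    assume "\<exists>\<Lambda>. \<forall>\<theta> d x u. closed_loop F \<Lambda> \<theta> d x0 x u \<longrightarrow> ltl_sat (\<lambda>k. obs \<mu> (x k)) \<phi>"
    then obtain L where "\<And>\<theta> d x u. closed_loop F L \<theta> d x0 x u \<Longrightarrow> ltl_sat (\<lambda>k. obs \<mu> (x k)) \<phi>"
      by blast
    then have "game_play F \<mu> \<alpha> (replay_strategy L \<circ> map (fst \<circ> fst)) ((x0, UNIV), s0) q
        \<Longrightarrow> rabin_acc \<Omega> (snd \<circ> q)" for q
      using closed_loop_of_replay_play accepting_iff by metis
    then show "x0 \<in> X0_max F \<mu> \<alpha> s0 \<Omega>"
      unfolding X0_max_def win_region_def by (auto intro: adp_states.init)
  next
    assume "x0 \<in> X0_max F \<mu> \<alpha> s0 \<Omega>"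
    then obtain \<sigma> where "\<And>q. game_play F \<mu> \<alpha> \<sigma> ((x0, UNIV), s0) q \<Longrightarrow> rabin_acc \<Omega> (snd \<circ> q)"
      unfolding X0_max_def win_region_def by auto
    then have "closed_loop F (controller_of_strategy F \<mu> \<alpha> s0 \<sigma>) \<theta> d x0 x u
        \<Longrightarrow> ltl_sat (\<lambda>k. obs \<mu> (x k)) \<phi>" for \<theta> d x u
      using play_of_closed_loop accepting_iff by metis
    then show "\<exists>\<Lambda>. \<forall>\<theta> d x u. closed_loop F \<Lambda> \<theta> d x0 x u \<longrightarrow> ltl_sat (\<lambda>k. obs \<mu> (x k)) \<phi>"
      by blast
  qed
qed

end
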